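(* Let $\rho \in L^1(\mathbb{R}^n)$ be a probability density whose support is the whole of $\mathbb{R}^n$, and let $E \subseteq \mathbb{R}^n$ be a bounded measurable set. For a finite set $P \subseteq \mathbb{R}^n$, let $D_E = \max\{\operatorname{diam} C(p) : p \in P,\ C(p) \cap E \neq \emptyset\}$ be the maximum diameter of a Voronoi cell of $P$ intersecting $E$. Then, regarded as a random variable in $P \sim \rho^m$ ($m$ i.i.d. samples from $\rho$), $D_E$ converges in probability to $0$ as $m \to \infty$.
   Context: For a finite set $P \subseteq \mathbb{R}^n$ of distinct points and Euclidean distance $d$, the Voronoi cell of $p \in P$ is $C(p) = \{x \in \mathbb{R}^n : d(x,q) \geq d(x,p) \text{ for all } q \in P\}$; $\operatorname{diam}$ denotes the supremum of pairwise distances (possibly $+\infty$). *)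

theory Defs
  imports "HOL-Probability.Probability"
begin

definition voronoi_cell :: "'a::euclidean_space set \<Rightarrow> 'a \<Rightarrow> 'a set" where
  "voronoi_cell P p = {x. \<forall>q\<in>P. dist x q \<ge> dist x p}"

definition ediam :: "'a::metric_space set \<Rightarrow> ereal" where
  "ediam S = Sup {ereal (dist x y) | x y. x \<in> S \<and> y \<in> S}"

text \<open>Maximal diameter of a Voronoi cell of P meeting E (Sup of the empty set is -infinity).\<close>
definition max_cell_diam :: "'a::euclidean_space set \<Rightarrow> 'a set \<Rightarrow> ereal" where
  "max_cell_diam E P = Sup {ediam (voronoi_cell P p) | p. p \<in> P \<and> voronoi_cell P p \<inter> E \<noteq> {}}"

end

theory Submission
  imports Defs
begin

text \<open>
  If the samples are \<open>\<delta>\<close>-dense near a point \<open>x\<close> of the Voronoi cell \<open>C(p)\<close>, then \<open>p\<close> lies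
  within \<open>\<delta>\<close> of \<open>x\<close>, and \<open>C(p)\<close> lies within \<open>2\<delta>\<close> of \<open>p\<close>: a point \<open>y\<close> of \<open>C(p)\<close> farther away
  would be closer than to \<open>p\<close> to a sample near the point of the segment from \<open>p\<close> to \<open>y\<close> at
  distance \<open>2\<delta>\<close> from \<open>p\<close>.  So every cell meeting \<open>E\<close> has diameter at most \<open>4\<delta>\<close> as soon as
  the samples hit each of finitely many balls of radius \<open>\<delta>/2\<close> covering the
  \<open>3\<delta>\<close>-neighbourhood of \<open>E\<close>.  Each of these balls has positive probability because \<open>\<rho>\<close> has
  full support, so the probability that one of them contains none of \<open>m\<close> i.i.d. samples
  decays geometrically in \<open>m\<close>.
\<close>

lemma voronoi_cell_subset_cball:
  fixes P :: "'a::euclidean_space set"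
  assumes "\<delta> > 0"
    and dense: "\<And>w. w \<in> cball x (3 * \<delta>) \<Longrightarrow> \<exists>q\<in>P. dist w q < \<delta>"
    and x: "x \<in> voronoi_cell P p"
  shows "voronoi_cell P p \<subseteq> cball p (2 * \<delta>)"
proof
  fix y assume y: "y \<in> voronoi_cell P p"
  obtain q where q: "q \<in> P" "dist x q < \<delta>"
    using dense[of x] \<open>\<delta> > 0\<close> by auto
  have dxp: "dist x p < \<delta>"
    using x q unfolding voronoi_cell_def by force
  show "y \<in> cball p (2 * \<delta>)"
  proof (rule ccontr)
    assume "y \<notin> cball p (2 * \<delta>)"
    then have far: "dist y p > 2 * \<delta>"
      by (simp add: dist_commute)
    then have "dist y p > 0"
      using \<open>\<delta> > 0\<close> by linarith
    define t where "t = 2 * \<delta> / dist y p"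
    have t: "0 < t" "t < 1" "t * dist y p = 2 * \<delta>"
      using far \<open>dist y p > 0\<close> \<open>\<delta> > 0\<close> by (auto simp: t_def field_simps)
    define z where "z = p + t *\<^sub>R (y - p)"
    have dzp: "dist z p = 2 * \<delta>"
      using t by (simp add: z_def dist_norm)
    have dyz: "dist y z = (1 - t) * dist y p"
    proof -
      have "y - z = (1 - t) *\<^sub>R (y - p)"
        by (simp add: z_def algebra_simps)
      then show ?thesis
        using t by (simp add: dist_norm)
    qed
    have "dist x z \<le> 3 * \<delta>"
      using dist_triangle[of x z p] dxp dzp by (simp add: dist_commute)
    then obtain q' where q': "q' \<in> P" "dist z q' < \<delta>"
      using dense by auto
    have "dist y p \<le> dist y q'"
      using y q' unfolding voronoi_cell_def by auto
    also have "\<dots> \<le> dist y z + dist z q'"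
      by (rule dist_triangle)
    finally have "2 * \<delta> < \<delta>"
      using t dyz q' by (simp add: algebra_simps)
    then show False
      using \<open>\<delta> > 0\<close> by simp
  qed
qed

lemma ediam_le_if_subset_cball:
  assumes "S \<subseteq> cball c r"
  shows "ediam S \<le> ereal (2 * r)"
  unfolding ediam_def
proof (rule Sup_least)
  fix d assume "d \<in> {ereal (dist x y) | x y. x \<in> S \<and> y \<in> S}"
  then obtain x y where "x \<in> S" "y \<in> S" and d: "d = ereal (dist x y)"
    by blast
  then have "dist c x \<le> r" "dist c y \<le> r"
    using assms by auto
  then show "d \<le> ereal (2 * r)"
    using dist_triangle[of x y c] by (simp add: d dist_commute)
qed

lemma max_cell_diam_le_if_dense:
  fixes E :: "'a::euclidean_space set"
  assumes "\<delta> > 0" and "\<And>x w. x \<in> E \<Longrightarrow> w \<in> cball x (3 * \<delta>) \<Longrightarrow> \<exists>q\<in>P. dist w q < \<delta>"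
  shows "max_cell_diam E P \<le> ereal (4 * \<delta>)"
  unfolding max_cell_diam_def
proof (rule Sup_least)
  fix e assume "e \<in> {ediam (voronoi_cell P p) | p. p \<in> P \<and> voronoi_cell P p \<inter> E \<noteq> {}}"
  then obtain p x where x: "x \<in> voronoi_cell P p" "x \<in> E" and e: "e = ediam (voronoi_cell P p)"
    by blast
  have "voronoi_cell P p \<subseteq> cball p (2 * \<delta>)"
    using assms(1) assms(2)[OF x(2)] x(1) by (rule voronoi_cell_subset_cball)
  then show "e \<le> ereal (4 * \<delta>)"
    unfolding e by (auto dest: ediam_le_if_subset_cball)
qed

lemma max_cell_diam_le_if_hits_cover:
  fixes E :: "'a::euclidean_space set"
  assumes "\<delta> > 0"
    and cover: "(\<Union>x\<in>E. cball x (3 * \<delta>)) \<subseteq> (\<Union>c\<in>K. ball c (\<delta> / 2))"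
    and hits: "\<And>c. c \<in> K \<Longrightarrow> \<exists>q\<in>P. dist c q < \<delta> / 2"
  shows "max_cell_diam E P \<le> ereal (4 * \<delta>)"
proof (rule max_cell_diam_le_if_dense[OF \<open>\<delta> > 0\<close>])
  fix x w assume "x \<in> E" "w \<in> cball x (3 * \<delta>)"
  then have "w \<in> (\<Union>c\<in>K. ball c (\<delta> / 2))"
    using cover by blast
  then obtain c where "c \<in> K" "dist c w < \<delta> / 2"
    by auto
  moreover obtain q where "q \<in> P" "dist c q < \<delta> / 2"
    using hits[OF \<open>c \<in> K\<close>] by blast
  ultimately have "dist w q < \<delta>"
    using dist_triangle[of w q c] dist_commute[of c w] by linarith
  then show "\<exists>q\<in>P. dist w q < \<delta>"
    using \<open>q \<in> P\<close> by blast
qed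

lemma PiM_Collect_all_notin_eq:
  "{x \<in> space (PiM I (\<lambda>_. M)). \<forall>i\<in>I. x i \<notin> B}
    = {x \<in> space (PiM I (\<lambda>_. M)). \<forall>i\<in>I. x i \<in> space M - B}"
  by (auto simp: space_PiM)

lemma sets_PiM_Collect_all_notin:
  assumes "finite I" "B \<in> sets M"
  shows "{x \<in> space (PiM I (\<lambda>_. M)). \<forall>i\<in>I. x i \<notin> B} \<in> sets (PiM I (\<lambda>_. M))"
  unfolding PiM_Collect_all_notin_eq using assms by measurable

lemma (in prob_space) measure_PiM_Collect_all_notin:
  assumes "finite I" "B \<in> events"
  shows "measure (PiM I (\<lambda>_. M)) {x \<in> space (PiM I (\<lambda>_. M)). \<forall>i\<in>I. x i \<notin> B}
    = (1 - prob B) ^ card I"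
proof -
  interpret Pi: product_prob_space "\<lambda>_. M" I
    by (simp add: product_prob_space_def product_prob_space_axioms_def
        product_sigma_finite_def prob_space_axioms sigma_finite_measure_axioms)
  have "emeasure (PiM I (\<lambda>_. M)) {x \<in> space (PiM I (\<lambda>_. M)). \<forall>i\<in>I. x i \<notin> B}
      = (\<Prod>i\<in>I. emeasure M (space M - B))"
    unfolding PiM_Collect_all_notin_eq using assms by (intro Pi.emeasure_PiM_Collect) auto
  then show ?thesis
    using assms
    by (simp add: Pi.P.emeasure_eq_measure emeasure_eq_measure prod_ennreal ennreal_power prob_compl)
qed

lemma (in prob_space) measure_PiM_some_event_missed_tendsto_0:
  assumes K: "finite K"
    and S: "\<And>c. c \<in> K \<Longrightarrow> S c \<in> events" "\<And>c. c \<in> K \<Longrightarrow> prob (S c) > 0"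
  shows "(\<lambda>m. measure (PiM {..<m} (\<lambda>_. M))
           (\<Union>c\<in>K. {x \<in> space (PiM {..<m} (\<lambda>_. M)). \<forall>i\<in>{..<m}. x i \<notin> S c})) \<longlonglongrightarrow> 0"
proof -
  let ?miss = "\<lambda>m c. {x \<in> space (PiM {..<m} (\<lambda>_. M)). \<forall>i\<in>{..<m::nat}. x i \<notin> S c}"
  have bound: "measure (PiM {..<m} (\<lambda>_. M)) (\<Union>c\<in>K. ?miss m c) \<le> (\<Sum>c\<in>K. (1 - prob (S c)) ^ m)"
    for m
  proof -
    have "measure (PiM {..<m} (\<lambda>_. M)) (\<Union>c\<in>K. ?miss m c)
        \<le> (\<Sum>c\<in>K. measure (PiM {..<m} (\<lambda>_. M)) (?miss m c))"
      using K S(1) by (intro measure_UNION_le) (auto intro: sets_PiM_Collect_all_notin)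
    also have "\<dots> = (\<Sum>c\<in>K. (1 - prob (S c)) ^ m)"
      using S(1) by (intro sum.cong) (simp_all add: measure_PiM_Collect_all_notin)
    finally show ?thesis .
  qed
  have "(\<lambda>m. \<Sum>c\<in>K. (1 - prob (S c)) ^ m) \<longlonglongrightarrow> 0"
    using S(2) by (intro tendsto_null_sum LIMSEQ_power_zero) auto
  then show ?thesis
    by (rule tendsto_sandwich[OF _ _ tendsto_const, rotated 2]) (simp_all add: always_eventually bound)
qed

lemma prob_space_density_lborel:
  assumes "\<And>x. f x \<ge> 0" "integrable lborel f" "integral\<^sup>L lborel f = 1"
  shows "prob_space (density lborel (\<lambda>x. ennreal (f x)))"
proof (rule prob_spaceI)
  have "emeasure (density lborel (\<lambda>x. ennreal (f x))) UNIV = (\<integral>\<^sup>+ x. ennreal (f x) \<partial>lborel)"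
    using assms(2) by (subst emeasure_density) auto
  also have "\<dots> = 1"
    using assms by (subst nn_integral_eq_integral) auto
  finally show "emeasure (density lborel (\<lambda>x. ennreal (f x)))
      (space (density lborel (\<lambda>x. ennreal (f x)))) = 1"
    by simp
qed

lemma bounded_thickening_finite_ball_cover:
  fixes E :: "'a::heine_borel set"
  assumes "bounded E" "r > 0"
  obtains K where "finite K" "(\<Union>x\<in>E. cball x s) \<subseteq> (\<Union>c\<in>K. ball c r)"
proof -
  obtain x\<^sub>0 R where R: "E \<subseteq> cball x\<^sub>0 R"
    using \<open>bounded E\<close> bounded_subset_cball by blast
  have "(\<Union>x\<in>E. cball x s) \<subseteq> cball x\<^sub>0 (R + s)"
  proof
    fix w assume "w \<in> (\<Union>x\<in>E. cball x s)"
    then obtain x where "dist x\<^sub>0 x \<le> R" "dist x w \<le> s"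
      using R by auto
    then show "w \<in> cball x\<^sub>0 (R + s)"
      using dist_triangle[of x\<^sub>0 w x] by simp
  qed
  moreover obtain K where "finite K" "cball x\<^sub>0 (R + s) \<subseteq> (\<Union>c\<in>K. ball c r)"
    using seq_compact_imp_totally_bounded[OF compact_imp_seq_compact[OF compact_cball[of x\<^sub>0 "R + s"]],
        rule_format, OF \<open>r > 0\<close>]
    by blast
  ultimately show ?thesis
    using that by (meson order_trans)
qed

theorem max_cell_diam_tendsto_0_in_probability:
  fixes M :: "'a::euclidean_space measure" and E :: "'a set"
  assumes "prob_space M"
    and sets_M: "sets M = sets borel"
    and support: "\<And>x e. e > 0 \<Longrightarrow> measure M (ball x e) > 0"
    and "bounded E" "\<epsilon> > 0"
  shows "\<exists>A. (\<forall>m. A m \<in> sets (PiM {..<m} (\<lambda>_. M)) \<and>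
              {X \<in> space (PiM {..<m} (\<lambda>_. M)). max_cell_diam E (X ` {..<m}) > ereal \<epsilon>} \<subseteq> A m) \<and>
           (\<lambda>m. measure (PiM {..<m} (\<lambda>_. M)) (A m)) \<longlonglongrightarrow> 0"
proof -
  interpret prob_space M by fact
  define \<delta> where "\<delta> = \<epsilon> / 4"
  have "\<delta> > 0"
    using \<open>\<epsilon> > 0\<close> by (simp add: \<delta>_def)
  then obtain K where "finite K"
    and cover: "(\<Union>x\<in>E. cball x (3 * \<delta>)) \<subseteq> (\<Union>c\<in>K. ball c (\<delta> / 2))"
    using bounded_thickening_finite_ball_cover[OF \<open>bounded E\<close>, of "\<delta> / 2"] by auto
  define A where
    "A m = (\<Union>c\<in>K. {X \<in> space (PiM {..<m} (\<lambda>_. M)). \<forall>i\<in>{..<m}. X i \<notin> ball c (\<delta> / 2)})" for m :: nat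
  have "A m \<in> sets (PiM {..<m} (\<lambda>_. M))" for m
    unfolding A_def
    using \<open>finite K\<close> sets_M by (intro sets.finite_UN sets_PiM_Collect_all_notin) auto
  moreover have "{X \<in> space (PiM {..<m} (\<lambda>_. M)). max_cell_diam E (X ` {..<m}) > ereal \<epsilon>} \<subseteq> A m"
    for m
  proof (rule subsetI, rule ccontr)
    fix X assume X: "X \<in> {X \<in> space (PiM {..<m} (\<lambda>_. M)). max_cell_diam E (X ` {..<m}) > ereal \<epsilon>}"
      and "X \<notin> A m"
    then have "\<exists>q\<in>X ` {..<m}. dist c q < \<delta> / 2" if "c \<in> K" for c
      using that unfolding A_def by auto
    then have "max_cell_diam E (X ` {..<m}) \<le> ereal (4 * \<delta>)"
      using \<open>\<delta> > 0\<close> cover by (intro max_cell_diam_le_if_hits_cover)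
    then show False
      using X by (simp add: \<delta>_def not_le[symmetric])
  qed
  moreover have "(\<lambda>m. measure (PiM {..<m} (\<lambda>_. M)) (A m)) \<longlonglongrightarrow> 0"
    unfolding A_def using \<open>finite K\<close> sets_M support \<open>\<delta> > 0\<close>
    by (intro measure_PiM_some_event_missed_tendsto_0) auto
  ultimately show ?thesis
    by blast
qed

theorem mainTheorem4:
  fixes \<rho> :: "'a::euclidean_space \<Rightarrow> real" and E :: "'a set"
  assumes "\<rho> \<in> borel_measurable lborel"
    and "\<forall>x. \<rho> x \<ge> 0"
    and "integrable lborel \<rho>"
    and "integral\<^sup>L lborel \<rho> = 1"
    and "\<forall>x. \<forall>e>0. emeasure (density lborel (\<lambda>y. ennreal (\<rho> y))) (ball x e) > 0"
    and "bounded E"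
    and "E \<in> sets lborel"
  shows "\<forall>\<epsilon>>0. \<exists>A. (\<forall>m.
            A m \<in> sets (PiM {..<m} (\<lambda>_. density lborel (\<lambda>y. ennreal (\<rho> y)))) \<and>
            {X \<in> space (PiM {..<m} (\<lambda>_. density lborel (\<lambda>y. ennreal (\<rho> y)))).
               max_cell_diam E (X ` {..<m}) > ereal \<epsilon>} \<subseteq> A m) \<and>
          (\<lambda>m. measure (PiM {..<m} (\<lambda>_. density lborel (\<lambda>y. ennreal (\<rho> y)))) (A m))
             \<longlonglongrightarrow> 0"
proof -
  have prob: "prob_space (density lborel (\<lambda>y. ennreal (\<rho> y)))"
    using assms(2-4) by (intro prob_space_density_lborel) auto
  then interpret prob_space "density lborel (\<lambda>y. ennreal (\<rho> y))" .
  have "prob (ball x e) > 0" if "e > 0" for x e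
    using assms(5) that by (simp add: emeasure_eq_measure)
  then show ?thesis
    using prob \<open>bounded E\<close> by (auto intro!: max_cell_diam_tendsto_0_in_probability)
qed

end
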